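(* Let $(M,d)$ be a compact metric space, $\varphi:M\to M$ continuous and $\mathcal G=\{G_n\}\in\mathcal A(M)$. Then $$\lim_{\delta\downarrow0}\limsup_{n\to\infty}\sup_{x\in M}\sup_{y,z\in B_n(x,\delta)}\tfrac1n|G_n(y)-G_n(z)|=0.$$ Moreover, if integers $m_\delta(n)\in\{0,\dots,n-1\}$ satisfy $\lim_{\delta\downarrow0}\limsup_{n}\frac1nm_\delta(n)=0$, then $$\lim_{\delta\downarrow0}\limsup_{n}\tfrac1n\|G_{n-m_\delta(n)}-G_n\|_\infty=0,\qquad \lim_{\delta\downarrow0}\limsup_{n}\sup_{x\in M}\sup_{y,z\in B_{n-m_\delta(n)}(x,\delta)}\tfrac1n|G_n(y)-G_n(z)|=0.$$
   Context: $C(M),B(M)$: continuous/bounded Borel real functions with sup norm; $S_nG=\sum_{k<n}G\circ\varphi^k$; $B_n(x,\delta)=\{y:d(\varphi^ky,\varphi^kx)<\delta,\ 0\le k\le n-1\}$. $\mathcal A(M)$: sequences $\{G_n\}\subset B(M)$ for which some $\{G^{(k)}\}\subset C(M)$ has $\lim_k\limsup_nn^{-1}\|G_n-S_nG^{(k)}\|_\infty=0$. *)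

theory Defs
  imports "HOL-Analysis.Analysis"
begin

definition supnorm :: "('a \<Rightarrow> real) \<Rightarrow> real" where
  "supnorm f = (SUP x. \<bar>f x\<bar>)"

definition birkhoff_sum :: "('a \<Rightarrow> 'a) \<Rightarrow> nat \<Rightarrow> ('a \<Rightarrow> real) \<Rightarrow> 'a \<Rightarrow> real" where
  "birkhoff_sum \<phi> n G x = (\<Sum>k<n. G ((\<phi> ^^ k) x))"

definition bowen_ball :: "('a::metric_space \<Rightarrow> 'a) \<Rightarrow> nat \<Rightarrow> 'a \<Rightarrow> real \<Rightarrow> 'a set" where
  "bowen_ball \<phi> n x \<delta> = {y. \<forall>k<n. dist ((\<phi> ^^ k) y) ((\<phi> ^^ k) x) < \<delta>}"

definition bdd_borel :: "('a::topological_space \<Rightarrow> real) \<Rightarrow> bool" where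
  "bdd_borel f \<longleftrightarrow> f \<in> borel_measurable borel \<and> bounded (range f)"

definition classA :: "('a::metric_space \<Rightarrow> 'a) \<Rightarrow> (nat \<Rightarrow> 'a \<Rightarrow> real) \<Rightarrow> bool" where
  "classA \<phi> G \<longleftrightarrow> (\<forall>n. bdd_borel (G n)) \<and>
     (\<exists>Gk :: nat \<Rightarrow> 'a \<Rightarrow> real. (\<forall>k. continuous_on UNIV (Gk k)) \<and>
        (\<lambda>k. limsup (\<lambda>n. ereal (supnorm (\<lambda>x. G n x - birkhoff_sum \<phi> n (Gk k) x) / real n)))
          \<longlonglongrightarrow> 0)"

end

theory Submission
  imports Defs
begin

text \<open>Up to a uniform error o(n), a sequence in A(M) is the Birkhoff sum S_n g of a single
  continuous g. On the compact space g is bounded, say by B, and uniformly continuous. Hence S_n g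
  varies by at most n \<epsilon> + 2 m B on the Bowen ball of small radius and length n - m (only the
  first n - m orbit points are controlled), and S_n g and S_(n-m) g differ by at most m B.
  When m/n is small, all these errors are small multiples of n.\<close>

lemma abs_le_supnorm:
  assumes "\<And>x. \<bar>f x\<bar> \<le> B"
  shows "\<bar>f x\<bar> \<le> supnorm f"
  unfolding supnorm_def by (rule cSUP_upper) (use assms in \<open>auto intro!: bdd_aboveI2\<close>)

lemma supnorm_least:
  assumes "\<And>x. \<bar>f x\<bar> \<le> c"
  shows "supnorm f \<le> c"
  unfolding supnorm_def by (rule cSUP_least) (use assms in auto)

lemma abs_birkhoff_sum_diff_le:
  assumes "\<And>u. \<bar>g u\<bar> \<le> B" and "p \<le> n"
  shows "\<bar>birkhoff_sum \<phi> n g x - birkhoff_sum \<phi> p g x\<bar> \<le> real (n - p) * B"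
proof -
  have "birkhoff_sum \<phi> n g x = birkhoff_sum \<phi> p g x + (\<Sum>k\<in>{p..<n}. g ((\<phi> ^^ k) x))"
    unfolding birkhoff_sum_def lessThan_atLeast0
    by (rule sum.atLeastLessThan_concat[symmetric]) (use assms(2) in auto)
  then have "birkhoff_sum \<phi> n g x - birkhoff_sum \<phi> p g x = (\<Sum>k\<in>{p..<n}. g ((\<phi> ^^ k) x))"
    by simp
  also have "\<bar>\<dots>\<bar> \<le> (\<Sum>k\<in>{p..<n}. \<bar>g ((\<phi> ^^ k) x)\<bar>)" by (rule sum_abs)
  also have "\<dots> \<le> (\<Sum>k\<in>{p..<n}. B)" by (intro sum_mono assms(1))
  finally show ?thesis by simp
qed

lemma abs_birkhoff_sum_le:
  assumes "\<And>u. \<bar>g u\<bar> \<le> B"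
  shows "\<bar>birkhoff_sum \<phi> n g x\<bar> \<le> real n * B"
  using abs_birkhoff_sum_diff_le[OF assms, of 0 n] by (simp add: birkhoff_sum_def)

lemma abs_birkhoff_sum_orbit_diff_le:
  assumes "\<And>u v. dist u v < r \<Longrightarrow> \<bar>g u - g v\<bar> \<le> e" and "\<And>u. \<bar>g u\<bar> \<le> B" and "p \<le> n"
    and "\<And>k. k < p \<Longrightarrow> dist ((\<phi> ^^ k) y) ((\<phi> ^^ k) z) < r"
  shows "\<bar>birkhoff_sum \<phi> n g y - birkhoff_sum \<phi> n g z\<bar> \<le> real p * e + 2 * real (n - p) * B"
proof -
  have "birkhoff_sum \<phi> p g y - birkhoff_sum \<phi> p g z = (\<Sum>k<p. g ((\<phi> ^^ k) y) - g ((\<phi> ^^ k) z))"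
    unfolding birkhoff_sum_def by (simp add: sum_subtractf)
  also have "\<bar>\<dots>\<bar> \<le> (\<Sum>k<p. \<bar>g ((\<phi> ^^ k) y) - g ((\<phi> ^^ k) z)\<bar>)" by (rule sum_abs)
  also have "\<dots> \<le> (\<Sum>k<p. e)" using assms(4) by (intro sum_mono assms(1)) auto
  finally have "\<bar>birkhoff_sum \<phi> p g y - birkhoff_sum \<phi> p g z\<bar> \<le> real p * e" by simp
  moreover have tail: "\<bar>birkhoff_sum \<phi> n g w - birkhoff_sum \<phi> p g w\<bar> \<le> real (n - p) * B" for w
    by (rule abs_birkhoff_sum_diff_le[OF assms(2,3)])
  ultimately show ?thesis
    using tail[of y] tail[of z] by linarith
qed

lemma bowen_ball_dist_less:
  assumes "y \<in> bowen_ball \<phi> n x \<delta>" and "z \<in> bowen_ball \<phi> n x \<delta>" and "k < n"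
  shows "dist ((\<phi> ^^ k) y) ((\<phi> ^^ k) z) < 2 * \<delta>"
  using assms dist_triangle_half_l[of "(\<phi> ^^ k) y" "(\<phi> ^^ k) x" "2 * \<delta>" "(\<phi> ^^ k) z"]
  by (auto simp: bowen_ball_def dist_commute)

lemma bowen_oscillation_nonneg:
  assumes "0 < \<delta>"
  shows "0 \<le> (SUP x. SUP y\<in>bowen_ball \<phi> n x \<delta>. SUP z\<in>bowen_ball \<phi> n x \<delta>. ereal (\<bar>f y - f z\<bar> / c))"
proof -
  have "x \<in> bowen_ball \<phi> n x \<delta>" for x using assms by (simp add: bowen_ball_def)
  then show ?thesis by (intro SUP_upper2[of undefined] SUP_upper2[of undefined]) fastforce+
qed

lemma bowen_oscillation_le:
  assumes "\<And>x y z. y \<in> bowen_ball \<phi> n x \<delta> \<Longrightarrow> z \<in> bowen_ball \<phi> n x \<delta> \<Longrightarrow> \<bar>f y - f z\<bar> / c \<le> e"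
  shows "(SUP x. SUP y\<in>bowen_ball \<phi> n x \<delta>. SUP z\<in>bowen_ball \<phi> n x \<delta>. ereal (\<bar>f y - f z\<bar> / c)) \<le> ereal e"
  using assms by (intro SUP_least) auto

lemma tendsto_limsup_at_right_0I:
  fixes F :: "real \<Rightarrow> nat \<Rightarrow> ereal"
  assumes nonneg: "\<And>\<delta> n. 0 < \<delta> \<Longrightarrow> 0 \<le> F \<delta> n"
    and small: "\<And>\<epsilon>. 0 < \<epsilon> \<Longrightarrow> \<forall>\<^sub>F \<delta> in at_right 0. \<forall>\<^sub>F n in sequentially. F \<delta> n \<le> ereal \<epsilon>"
  shows "((\<lambda>\<delta>. limsup (F \<delta>)) \<longlongrightarrow> 0) (at_right 0)"
proof (rule order_tendstoI)
  fix a :: ereal assume "a < 0"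
  show "\<forall>\<^sub>F \<delta> in at_right 0. a < limsup (F \<delta>)"
    using eventually_at_right_less[of 0]
  proof (rule eventually_mono)
    fix \<delta> :: real assume "0 < \<delta>"
    then have "0 \<le> limsup (F \<delta>)" by (intro le_Limsup) (auto simp: nonneg)
    with \<open>a < 0\<close> show "a < limsup (F \<delta>)" by simp
  qed
next
  fix a :: ereal assume "0 < a"
  then obtain \<epsilon> where "0 < ereal \<epsilon>" "ereal \<epsilon> < a" using ereal_dense2 by blast
  then have "\<forall>\<^sub>F \<delta> in at_right 0. limsup (F \<delta>) \<le> ereal \<epsilon>"
    using small[of \<epsilon>] by (auto elim!: eventually_mono intro: Limsup_bounded)
  with \<open>ereal \<epsilon> < a\<close> show "\<forall>\<^sub>F \<delta> in at_right 0. limsup (F \<delta>) < a"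
    by (auto elim!: eventually_mono)
qed

lemma eventually_less_of_limsup_tendsto_0:
  assumes "((\<lambda>i. limsup (f i)) \<longlongrightarrow> 0) F" and "0 < \<eta>"
  shows "\<forall>\<^sub>F i in F. \<forall>\<^sub>F n in sequentially. f i n < ereal \<eta>"
  using order_tendstoD(2)[OF assms(1), of "ereal \<eta>"] assms(2)
  by (auto elim!: eventually_mono intro: Limsup_lessD)

lemma eventually_mult_le_of_limsup_ratio_tendsto_0:
  fixes m :: "'b \<Rightarrow> nat \<Rightarrow> nat"
  assumes "((\<lambda>i. limsup (\<lambda>n. ereal (real (m i n) / real n))) \<longlongrightarrow> 0) F" and "0 < B" and "0 < c"
  shows "\<forall>\<^sub>F i in F. \<forall>\<^sub>F n in sequentially. real (m i n) * B \<le> c * real n"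
proof -
  have "\<forall>\<^sub>F i in F. \<forall>\<^sub>F n in sequentially. real (m i n) / real n < c / B"
    using eventually_less_of_limsup_tendsto_0[OF assms(1), of "c / B"] assms(2,3) by simp
  then show ?thesis
  proof (rule eventually_mono)
    fix i assume "\<forall>\<^sub>F n in sequentially. real (m i n) / real n < c / B"
    with eventually_gt_at_top[of 0]
    show "\<forall>\<^sub>F n in sequentially. real (m i n) * B \<le> c * real n"
      by eventually_elim (use \<open>0 < B\<close> in \<open>simp add: field_simps\<close>)
  qed
qed

lemma filterlim_diff_sequentially:
  assumes "\<forall>\<^sub>F n in sequentially. 2 * m n \<le> n"
  shows "filterlim (\<lambda>n. n - m n) sequentially sequentially"
  unfolding filterlim_at_top
proof
  fix Z :: nat
  show "\<forall>\<^sub>F n in sequentially. Z \<le> n - m n"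
    using assms eventually_ge_at_top[of "2 * Z"] by eventually_elim linarith
qed

lemma continuous_on_compact_UNIV_abs_bound:
  fixes g :: "'a::metric_space \<Rightarrow> real"
  assumes "compact (UNIV :: 'a set)" and "continuous_on UNIV g"
  obtains B where "0 < B" and "\<And>u. \<bar>g u\<bar> \<le> B"
  using compact_imp_bounded[OF compact_continuous_image[OF assms(2,1)]]
  by (auto simp: bounded_pos)

lemma classA_abs_bound:
  assumes "classA \<phi> G"
  obtains C where "\<And>x. \<bar>G n x\<bar> \<le> C"
  using assms unfolding classA_def bdd_borel_def bounded_iff by fastforce

lemma classA_approx:
  fixes \<phi> :: "'a::metric_space \<Rightarrow> 'a"
  assumes compact: "compact (UNIV :: 'a set)" and G: "classA \<phi> G" and "0 < e"
  obtains g where "continuous_on UNIV g"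
    and "\<forall>\<^sub>F n in sequentially. \<forall>x. \<bar>G n x - birkhoff_sum \<phi> n g x\<bar> \<le> e * real n"
proof -
  obtain Gk where cont: "\<And>k. continuous_on UNIV (Gk k)"
    and lim: "(\<lambda>k. limsup (\<lambda>n. ereal (supnorm (\<lambda>x. G n x - birkhoff_sum \<phi> n (Gk k) x) / real n)))
      \<longlonglongrightarrow> 0"
    using G unfolding classA_def by blast
  obtain k where k: "\<forall>\<^sub>F n in sequentially.
      ereal (supnorm (\<lambda>x. G n x - birkhoff_sum \<phi> n (Gk k) x) / real n) < ereal e"
    using eventually_happens'[OF _ eventually_less_of_limsup_tendsto_0[OF lim \<open>0 < e\<close>]] by auto
  obtain B where B: "\<And>u. \<bar>Gk k u\<bar> \<le> B"
    using continuous_on_compact_UNIV_abs_bound[OF compact cont] by blast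
  have le_supnorm: "\<bar>G n x - birkhoff_sum \<phi> n (Gk k) x\<bar> \<le> supnorm (\<lambda>x. G n x - birkhoff_sum \<phi> n (Gk k) x)"
    for n x
  proof -
    obtain C where "\<And>x. \<bar>G n x\<bar> \<le> C"
      using classA_abs_bound[OF G] by blast
    then have "\<bar>G n x - birkhoff_sum \<phi> n (Gk k) x\<bar> \<le> C + real n * B" for x
      using abs_birkhoff_sum_le[of "Gk k" B \<phi> n x] B by (smt (verit))
    then show ?thesis by (rule abs_le_supnorm)
  qed
  from k eventually_gt_at_top[of 0]
  have "\<forall>\<^sub>F n in sequentially. \<forall>x. \<bar>G n x - birkhoff_sum \<phi> n (Gk k) x\<bar> \<le> e * real n"
  proof eventually_elim
    case (elim n)
    then have "supnorm (\<lambda>x. G n x - birkhoff_sum \<phi> n (Gk k) x) \<le> e * real n"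
      by (simp add: pos_divide_less_eq less_imp_le)
    then show ?case using le_supnorm[of n] by (blast intro: order_trans)
  qed
  with cont that show ?thesis by blast
qed

lemma classA_supnorm_shift_tendsto_0:
  fixes \<phi> :: "'a::metric_space \<Rightarrow> 'a" and G :: "nat \<Rightarrow> 'a \<Rightarrow> real" and m :: "real \<Rightarrow> nat \<Rightarrow> nat"
  assumes compact: "compact (UNIV :: 'a set)" and G: "classA \<phi> G"
    and m: "((\<lambda>\<delta>. limsup (\<lambda>n. ereal (real (m \<delta> n) / real n))) \<longlongrightarrow> 0) (at_right 0)"
  shows "((\<lambda>\<delta>. limsup (\<lambda>n. ereal (supnorm (\<lambda>x. G (n - m \<delta> n) x - G n x) / real n)))
    \<longlongrightarrow> 0) (at_right 0)"
proof (rule tendsto_limsup_at_right_0I)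
  fix \<delta> :: real and n :: nat
  obtain C C' where C: "\<And>x. \<bar>G (n - m \<delta> n) x\<bar> \<le> C" and C': "\<And>x. \<bar>G n x\<bar> \<le> C'"
    using classA_abs_bound[OF G] by metis
  have "\<bar>G (n - m \<delta> n) x - G n x\<bar> \<le> C + C'" for x
    using C[of x] C'[of x] by linarith
  then have "0 \<le> supnorm (\<lambda>x. G (n - m \<delta> n) x - G n x)"
    by (meson abs_ge_zero abs_le_supnorm order_trans)
  then show "0 \<le> ereal (supnorm (\<lambda>x. G (n - m \<delta> n) x - G n x) / real n)"
    by simp
next
  fix \<epsilon> :: real assume "0 < \<epsilon>"
  then obtain g where g: "continuous_on UNIV g"
    and approx: "\<forall>\<^sub>F n in sequentially. \<forall>x. \<bar>G n x - birkhoff_sum \<phi> n g x\<bar> \<le> \<epsilon> / 3 * real n"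
    using classA_approx[OF compact G, of "\<epsilon> / 3"] by auto
  obtain B where "0 < B" and B: "\<And>u. \<bar>g u\<bar> \<le> B"
    using continuous_on_compact_UNIV_abs_bound[OF compact g] by blast
  have "\<forall>\<^sub>F \<delta> in at_right 0. (\<forall>\<^sub>F n in sequentially. real (m \<delta> n) * B \<le> \<epsilon> / 3 * real n)
      \<and> (\<forall>\<^sub>F n in sequentially. real (m \<delta> n) * 2 \<le> 1 * real n)"
    using \<open>0 < \<epsilon>\<close> \<open>0 < B\<close>
    by (intro eventually_conj eventually_mult_le_of_limsup_ratio_tendsto_0[OF m]) auto
  then show "\<forall>\<^sub>F \<delta> in at_right 0. \<forall>\<^sub>F n in sequentially.
      ereal (supnorm (\<lambda>x. G (n - m \<delta> n) x - G n x) / real n) \<le> ereal \<epsilon>"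
  proof (rule eventually_mono, elim conjE)
    fix \<delta> :: real
    assume small: "\<forall>\<^sub>F n in sequentially. real (m \<delta> n) * B \<le> \<epsilon> / 3 * real n"
      and half: "\<forall>\<^sub>F n in sequentially. real (m \<delta> n) * 2 \<le> 1 * real n"
    have "\<forall>\<^sub>F n in sequentially. 2 * m \<delta> n \<le> n"
      using half by eventually_elim linarith
    then have "filterlim (\<lambda>n. n - m \<delta> n) sequentially sequentially"
      by (rule filterlim_diff_sequentially)
    with approx have approx_shifted: "\<forall>\<^sub>F n in sequentially. \<forall>x.
        \<bar>G (n - m \<delta> n) x - birkhoff_sum \<phi> (n - m \<delta> n) g x\<bar> \<le> \<epsilon> / 3 * real (n - m \<delta> n)"
      by (rule eventually_compose_filterlim)
    from small approx approx_shifted eventually_gt_at_top[of 0]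
    show "\<forall>\<^sub>F n in sequentially.
        ereal (supnorm (\<lambda>x. G (n - m \<delta> n) x - G n x) / real n) \<le> ereal \<epsilon>"
    proof eventually_elim
      case (elim n)
      define p where "p = n - m \<delta> n"
      have "real (n - p) * B \<le> real (m \<delta> n) * B"
        using \<open>0 < B\<close> by (intro mult_right_mono) (auto simp: p_def)
      moreover have "\<epsilon> / 3 * real p \<le> \<epsilon> / 3 * real n"
        using \<open>0 < \<epsilon>\<close> by (simp add: p_def)
      moreover have sums: "\<bar>birkhoff_sum \<phi> n g x - birkhoff_sum \<phi> p g x\<bar> \<le> real (n - p) * B" for x
        using B by (rule abs_birkhoff_sum_diff_le) (simp add: p_def)
      ultimately have "\<bar>G p x - G n x\<bar> \<le> \<epsilon> * real n" for x
        using elim(1) elim(2)[rule_format, of x] elim(3)[rule_format, of x] sums[of x]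
        unfolding p_def[symmetric] by linarith
      then have "supnorm (\<lambda>x. G p x - G n x) \<le> \<epsilon> * real n"
        by (rule supnorm_least)
      then show ?case
        using elim(4) by (simp add: p_def pos_divide_le_eq)
    qed
  qed
qed

lemma classA_bowen_oscillation_shift_tendsto_0:
  fixes \<phi> :: "'a::metric_space \<Rightarrow> 'a" and G :: "nat \<Rightarrow> 'a \<Rightarrow> real" and m :: "real \<Rightarrow> nat \<Rightarrow> nat"
  assumes compact: "compact (UNIV :: 'a set)" and G: "classA \<phi> G"
    and m: "((\<lambda>\<delta>. limsup (\<lambda>n. ereal (real (m \<delta> n) / real n))) \<longlongrightarrow> 0) (at_right 0)"
  shows "((\<lambda>\<delta>. limsup (\<lambda>n. SUP x. SUP y\<in>bowen_ball \<phi> (n - m \<delta> n) x \<delta>.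
      SUP z\<in>bowen_ball \<phi> (n - m \<delta> n) x \<delta>. ereal (\<bar>G n y - G n z\<bar> / real n))) \<longlongrightarrow> 0) (at_right 0)"
proof (rule tendsto_limsup_at_right_0I)
  fix \<delta> :: real and n :: nat assume "0 < \<delta>"
  then show "0 \<le> (SUP x. SUP y\<in>bowen_ball \<phi> (n - m \<delta> n) x \<delta>.
      SUP z\<in>bowen_ball \<phi> (n - m \<delta> n) x \<delta>. ereal (\<bar>G n y - G n z\<bar> / real n))"
    by (rule bowen_oscillation_nonneg)
next
  fix \<epsilon> :: real assume "0 < \<epsilon>"
  then obtain g where g: "continuous_on UNIV g"
    and approx: "\<forall>\<^sub>F n in sequentially. \<forall>x. \<bar>G n x - birkhoff_sum \<phi> n g x\<bar> \<le> \<epsilon> / 5 * real n"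
    using classA_approx[OF compact G, of "\<epsilon> / 5"] by auto
  obtain B where "0 < B" and B: "\<And>u. \<bar>g u\<bar> \<le> B"
    using continuous_on_compact_UNIV_abs_bound[OF compact g] by blast
  have "uniformly_continuous_on UNIV g"
    by (rule compact_uniformly_continuous[OF g compact])
  then obtain r where "0 < r" and "\<And>u v. dist u v < r \<Longrightarrow> dist (g u) (g v) < \<epsilon> / 5"
    using \<open>0 < \<epsilon>\<close> unfolding uniformly_continuous_on_def by (metis UNIV_I divide_pos_pos zero_less_numeral)
  then have r: "\<And>u v. dist u v < r \<Longrightarrow> \<bar>g u - g v\<bar> \<le> \<epsilon> / 5"
    by (simp add: dist_real_def less_imp_le)
  have "\<forall>\<^sub>F \<delta> in at_right 0. 2 * \<delta> < r"
    using \<open>0 < r\<close> by (auto simp: eventually_at_right_field intro!: exI[of _ "r / 2"])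
  moreover have "\<forall>\<^sub>F \<delta> in at_right 0. \<forall>\<^sub>F n in sequentially. real (m \<delta> n) * B \<le> \<epsilon> / 5 * real n"
    using \<open>0 < \<epsilon>\<close> \<open>0 < B\<close> by (intro eventually_mult_le_of_limsup_ratio_tendsto_0[OF m]) auto
  ultimately show "\<forall>\<^sub>F \<delta> in at_right 0. \<forall>\<^sub>F n in sequentially.
      (SUP x. SUP y\<in>bowen_ball \<phi> (n - m \<delta> n) x \<delta>.
        SUP z\<in>bowen_ball \<phi> (n - m \<delta> n) x \<delta>. ereal (\<bar>G n y - G n z\<bar> / real n)) \<le> ereal \<epsilon>"
  proof eventually_elim
    case (elim \<delta>)
    from elim(2) approx eventually_gt_at_top[of 0]
    show ?case
    proof eventually_elim
      case (elim n)
      define p where "p = n - m \<delta> n"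
      show ?case
        unfolding p_def[symmetric]
      proof (rule bowen_oscillation_le)
        fix x y z assume y: "y \<in> bowen_ball \<phi> p x \<delta>" and z: "z \<in> bowen_ball \<phi> p x \<delta>"
        have "\<bar>birkhoff_sum \<phi> n g y - birkhoff_sum \<phi> n g z\<bar>
            \<le> real p * (\<epsilon> / 5) + 2 * real (n - p) * B"
          using r B bowen_ball_dist_less[OF y z] \<open>2 * \<delta> < r\<close>
          by (intro abs_birkhoff_sum_orbit_diff_le) (force simp: p_def)+
        moreover have "real (n - p) * B \<le> real (m \<delta> n) * B"
          using \<open>0 < B\<close> by (intro mult_right_mono) (auto simp: p_def)
        moreover have "real p * (\<epsilon> / 5) \<le> \<epsilon> / 5 * real n"
          using \<open>0 < \<epsilon>\<close> by (simp add: p_def)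
        ultimately have "\<bar>G n y - G n z\<bar> \<le> \<epsilon> * real n"
          using elim(1) elim(2)[rule_format, of y] elim(2)[rule_format, of z] by linarith
        then show "\<bar>G n y - G n z\<bar> / real n \<le> \<epsilon>"
          using elim(3) by (simp add: pos_divide_le_eq)
      qed
    qed
  qed
qed

theorem lemma2p4:
  fixes \<phi> :: "'a::metric_space \<Rightarrow> 'a" and G :: "nat \<Rightarrow> 'a \<Rightarrow> real"
  assumes "compact (UNIV :: 'a set)"
    and "continuous_on UNIV \<phi>"
    and "classA \<phi> G"
  shows "((\<lambda>\<delta>. limsup (\<lambda>n. SUP x. SUP y\<in>bowen_ball \<phi> n x \<delta>. SUP z\<in>bowen_ball \<phi> n x \<delta>.
             ereal (\<bar>G n y - G n z\<bar> / real n))) \<longlongrightarrow> 0) (at_right 0)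
    \<and> (\<forall>m :: real \<Rightarrow> nat \<Rightarrow> nat.
         (\<forall>\<delta>>0. \<forall>n>0. m \<delta> n < n) \<and>
         ((\<lambda>\<delta>. limsup (\<lambda>n. ereal (real (m \<delta> n) / real n))) \<longlongrightarrow> 0) (at_right 0)
         \<longrightarrow>
         ((\<lambda>\<delta>. limsup (\<lambda>n. ereal (supnorm (\<lambda>x. G (n - m \<delta> n) x - G n x) / real n)))
            \<longlongrightarrow> 0) (at_right 0)
         \<and> ((\<lambda>\<delta>. limsup (\<lambda>n. SUP x. SUP y\<in>bowen_ball \<phi> (n - m \<delta> n) x \<delta>.
                SUP z\<in>bowen_ball \<phi> (n - m \<delta> n) x \<delta>. ereal (\<bar>G n y - G n z\<bar> / real n)))
            \<longlongrightarrow> 0) (at_right 0))"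
proof -
  have "((\<lambda>\<delta>. limsup (\<lambda>n. ereal (real ((\<lambda>_ _. 0) \<delta> n) / real n))) \<longlongrightarrow> 0) (at_right 0)"
    by (simp add: Limsup_const flip: zero_ereal_def)
  from classA_bowen_oscillation_shift_tendsto_0[OF assms(1,3) this]
  have "((\<lambda>\<delta>. limsup (\<lambda>n. SUP x. SUP y\<in>bowen_ball \<phi> n x \<delta>. SUP z\<in>bowen_ball \<phi> n x \<delta>.
      ereal (\<bar>G n y - G n z\<bar> / real n))) \<longlongrightarrow> 0) (at_right 0)"
    by simp
  then show ?thesis
    using classA_supnorm_shift_tendsto_0[OF assms(1,3)]
      classA_bowen_oscillation_shift_tendsto_0[OF assms(1,3)]
    by blast
qed

end
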